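(* Let $X$ be a set and $\{d_r\colon X\times X\to\mathbb{R}_{\ge0}\cup\{\infty\}\}_{r>0}$ a family satisfying the weaker $\{d_r\}$-axioms (see context). For $r,\varepsilon>0$ set $U_r^\varepsilon=\{(x,y)\in X\times X\mid d_r(x,y)<\varepsilon\}$, and call $U\subset X\times X$ an entourage if $U_r^\varepsilon\subset U$ for some $r>0,\varepsilon>0$. Then the collection $\mathcal U$ of all entourages is a quasi-uniformity on $X$. Moreover, if $d_r(x,y)=d_r(y,x)$ for all $x,y\in X$ and $r>0$, then $\mathcal U$ is a uniformity.
   Context: The weaker $\{d_r\}$-axioms, required for all $x,y,z\in X$: (Self-distance) $d_r(x,x)=0$ for all $r>0$. (Upper semi-continuity) if $r_1\le r_2$ then $d_{r_1}(x,y)\le d_{r_2}(x,y)$; and if $d_r(x,y)<\varepsilon$ there is $\delta>0$ with $d_{r+\delta}(x,y)<\varepsilon$. (Weaker triangle inequality) for $r_1,r_2,r_3>0$, if $d_{r_1+r_2+r_3}(x,y)<r_3$ and $d_{r_1+r_2+r_3}(y,z)<r_2$, then $d_{r_1}(x,z)\le d_{r_1+r_2+r_3}(x,y)+d_{r_1+r_2+r_3}(y,z)$. A quasi-uniformity on $X$ is a collection $\mathcal U$ of subsets of $X\times X$ such that: supersets of members are members; it is closed under finite intersections; every member contains the diagonal; for each $U\in\mathcal U$ there is $V\in\mathcal U$ with $V\circ V\subset U$, where $U\circ V=\{(x,z)\mid \exists y,\ (x,y)\in U,(y,z)\in V\}$. It is a uniformity if additionally $U\in\mathcal U$ implies $U^{-1}=\{(y,x)\mid(x,y)\in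 U\}\in\mathcal U$. *)

theory Defs
  imports "HOL-Analysis.Analysis"
begin

text \<open>The set X is the type 'a; the family d_r : X x X -> [0,\<infinity>] is
  d :: real => 'a => 'a => ennreal, only meaningful for r > 0.\<close>

definition weaker_dr_axioms :: "(real \<Rightarrow> 'a \<Rightarrow> 'a \<Rightarrow> ennreal) \<Rightarrow> bool" where
  "weaker_dr_axioms d \<longleftrightarrow>
     (\<forall>x r. r > 0 \<longrightarrow> d r x x = 0) \<and>
     (\<forall>x y r1 r2. 0 < r1 \<longrightarrow> r1 \<le> r2 \<longrightarrow> d r1 x y \<le> d r2 x y) \<and>
     (\<forall>x y r (\<epsilon>::real). r > 0 \<longrightarrow> d r x y < ennreal \<epsilon> \<longrightarrow>
        (\<exists>\<delta>>0. d (r + \<delta>) x y < ennreal \<epsilon>)) \<and>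
     (\<forall>x y z r1 r2 r3. r1 > 0 \<longrightarrow> r2 > 0 \<longrightarrow> r3 > 0 \<longrightarrow>
        d (r1 + r2 + r3) x y < ennreal r3 \<longrightarrow> d (r1 + r2 + r3) y z < ennreal r2 \<longrightarrow>
        d r1 x z \<le> d (r1 + r2 + r3) x y + d (r1 + r2 + r3) y z)"

definition is_quasi_uniformity :: "('a \<times> 'a) set set \<Rightarrow> bool" where
  "is_quasi_uniformity \<U> \<longleftrightarrow>
     (\<forall>U\<in>\<U>. \<forall>V. U \<subseteq> V \<longrightarrow> V \<in> \<U>) \<and>
     (\<forall>U\<in>\<U>. \<forall>V\<in>\<U>. U \<inter> V \<in> \<U>) \<and>
     (\<forall>U\<in>\<U>. Id \<subseteq> U) \<and>
     (\<forall>U\<in>\<U>. \<exists>V\<in>\<U>. V O V \<subseteq> U)"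

definition is_uniformity :: "('a \<times> 'a) set set \<Rightarrow> bool" where
  "is_uniformity \<U> \<longleftrightarrow> is_quasi_uniformity \<U> \<and> (\<forall>U\<in>\<U>. U\<inverse> \<in> \<U>)"

definition dr_entourages :: "(real \<Rightarrow> 'a \<Rightarrow> 'a \<Rightarrow> ennreal) \<Rightarrow> ('a \<times> 'a) set set" where
  "dr_entourages d = {U. \<exists>r>0. \<exists>\<epsilon>::real>0. {(x, y). d r x y < ennreal \<epsilon>} \<subseteq> U}"

end

theory Submission
  imports Defs
begin

text \<open>Write \<open>U\<^sub>r\<^sup>\<epsilon>\<close> for the basic entourage \<open>{d\<^sub>r < \<epsilon>}\<close>. These sets
  shrink as \<open>r\<close> grows and \<open>\<epsilon>\<close> shrinks, so the entourages form a filter; they contain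
  the diagonal since \<open>d\<^sub>r(x,x) = 0\<close>; and the weaker triangle inequality with
  \<open>r\<^sub>2 = r\<^sub>3 = \<epsilon>/2\<close> gives \<open>U\<^bsub>r+\<epsilon>\<^esub>\<^bsup>\<epsilon>/2\<^esup> \<circ> U\<^bsub>r+\<epsilon>\<^esub>\<^bsup>\<epsilon>/2\<^esup> \<subseteq> U\<^sub>r\<^sup>\<epsilon>\<close>.\<close>

definition dr_basic_entourage :: "(real \<Rightarrow> 'a \<Rightarrow> 'a \<Rightarrow> ennreal) \<Rightarrow> real \<Rightarrow> real \<Rightarrow> ('a \<times> 'a) set"
  where "dr_basic_entourage d r \<epsilon> = {(x, y). d r x y < ennreal \<epsilon>}"

lemma mem_dr_basic_entourage [simp]:
  "(x, y) \<in> dr_basic_entourage d r \<epsilon> \<longleftrightarrow> d r x y < ennreal \<epsilon>"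
  by (simp add: dr_basic_entourage_def)

lemma dr_entourages_iff:
  "U \<in> dr_entourages d \<longleftrightarrow> (\<exists>r>0. \<exists>\<epsilon>>0. dr_basic_entourage d r \<epsilon> \<subseteq> U)"
  by (simp add: dr_entourages_def dr_basic_entourage_def)

lemma dr_entouragesI:
  "r > 0 \<Longrightarrow> \<epsilon> > 0 \<Longrightarrow> dr_basic_entourage d r \<epsilon> \<subseteq> U \<Longrightarrow> U \<in> dr_entourages d"
  by (auto simp: dr_entourages_iff)

lemma weaker_dr_axioms_self_distance:
  "weaker_dr_axioms d \<Longrightarrow> r > 0 \<Longrightarrow> d r x x = 0"
  by (simp add: weaker_dr_axioms_def)

lemma weaker_dr_axioms_mono:
  "weaker_dr_axioms d \<Longrightarrow> 0 < r\<^sub>1 \<Longrightarrow> r\<^sub>1 \<le> r\<^sub>2 \<Longrightarrow> d r\<^sub>1 x y \<le> d r\<^sub>2 x y"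
  by (simp add: weaker_dr_axioms_def)

lemma weaker_dr_axioms_triangle:
  assumes "weaker_dr_axioms d" "r\<^sub>1 > 0" "r\<^sub>2 > 0" "r\<^sub>3 > 0"
    and "d (r\<^sub>1 + r\<^sub>2 + r\<^sub>3) x y < ennreal r\<^sub>3" "d (r\<^sub>1 + r\<^sub>2 + r\<^sub>3) y z < ennreal r\<^sub>2"
  shows "d r\<^sub>1 x z \<le> d (r\<^sub>1 + r\<^sub>2 + r\<^sub>3) x y + d (r\<^sub>1 + r\<^sub>2 + r\<^sub>3) y z"
  using assms unfolding weaker_dr_axioms_def by blast

lemma dr_basic_entourage_antimono:
  assumes "weaker_dr_axioms d" "0 < r\<^sub>1" "r\<^sub>1 \<le> r\<^sub>2" "\<epsilon>\<^sub>2 \<le> \<epsilon>\<^sub>1"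
  shows "dr_basic_entourage d r\<^sub>2 \<epsilon>\<^sub>2 \<subseteq> dr_basic_entourage d r\<^sub>1 \<epsilon>\<^sub>1"
proof clarify
  fix x y assume "(x, y) \<in> dr_basic_entourage d r\<^sub>2 \<epsilon>\<^sub>2"
  then have "d r\<^sub>2 x y < ennreal \<epsilon>\<^sub>2"
    by simp
  moreover have "d r\<^sub>1 x y \<le> d r\<^sub>2 x y"
    using assms(1-3) by (rule weaker_dr_axioms_mono)
  moreover have "ennreal \<epsilon>\<^sub>2 \<le> ennreal \<epsilon>\<^sub>1"
    using assms(4) by (rule ennreal_leI)
  ultimately have "d r\<^sub>1 x y < ennreal \<epsilon>\<^sub>1"
    by order
  then show "(x, y) \<in> dr_basic_entourage d r\<^sub>1 \<epsilon>\<^sub>1"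
    by simp
qed

lemma Id_subset_dr_basic_entourage:
  "weaker_dr_axioms d \<Longrightarrow> r > 0 \<Longrightarrow> \<epsilon> > 0 \<Longrightarrow> Id \<subseteq> dr_basic_entourage d r \<epsilon>"
  by (auto simp: weaker_dr_axioms_self_distance)

lemma dr_basic_entourage_relcomp_subset:
  assumes "weaker_dr_axioms d" "r > 0" "\<epsilon> > 0"
  shows "dr_basic_entourage d (r + \<epsilon>) (\<epsilon>/2) O dr_basic_entourage d (r + \<epsilon>) (\<epsilon>/2)
           \<subseteq> dr_basic_entourage d r \<epsilon>"
proof clarify
  fix x y z
  assume "(x, y) \<in> dr_basic_entourage d (r + \<epsilon>) (\<epsilon>/2)"
    and "(y, z) \<in> dr_basic_entourage d (r + \<epsilon>) (\<epsilon>/2)"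
  moreover have halves: "r + \<epsilon>/2 + \<epsilon>/2 = r + \<epsilon>"
    by simp
  ultimately have small: "d (r + \<epsilon>/2 + \<epsilon>/2) x y < ennreal (\<epsilon>/2)" "d (r + \<epsilon>/2 + \<epsilon>/2) y z < ennreal (\<epsilon>/2)"
    unfolding halves by simp_all
  have "d r x z \<le> d (r + \<epsilon>/2 + \<epsilon>/2) x y + d (r + \<epsilon>/2 + \<epsilon>/2) y z"
    using assms small by (intro weaker_dr_axioms_triangle) auto
  also have "\<dots> < ennreal (\<epsilon>/2 + \<epsilon>/2)"
    using small by (rule add_mono_ennreal)
  finally show "(x, z) \<in> dr_basic_entourage d r \<epsilon>"
    by simp
qed

lemma converse_dr_basic_entourage:
  "(\<And>x y. d r x y = d r y x) \<Longrightarrow> (dr_basic_entourage d r \<epsilon>)\<inverse> = dr_basic_entourage d r \<epsilon>"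
  by auto

lemma dr_entourages_Int:
  assumes "weaker_dr_axioms d" "U \<in> dr_entourages d" "V \<in> dr_entourages d"
  shows "U \<inter> V \<in> dr_entourages d"
proof -
  obtain r\<^sub>U \<epsilon>\<^sub>U r\<^sub>V \<epsilon>\<^sub>V where pos: "r\<^sub>U > 0" "\<epsilon>\<^sub>U > 0" "r\<^sub>V > 0" "\<epsilon>\<^sub>V > 0"
    and sub: "dr_basic_entourage d r\<^sub>U \<epsilon>\<^sub>U \<subseteq> U" "dr_basic_entourage d r\<^sub>V \<epsilon>\<^sub>V \<subseteq> V"
    using assms(2,3) by (auto simp: dr_entourages_iff)
  let ?W = "dr_basic_entourage d (max r\<^sub>U r\<^sub>V) (min \<epsilon>\<^sub>U \<epsilon>\<^sub>V)"
  have "?W \<subseteq> dr_basic_entourage d r\<^sub>U \<epsilon>\<^sub>U" "?W \<subseteq> dr_basic_entourage d r\<^sub>V \<epsilon>\<^sub>V"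
    using assms(1) pos by (intro dr_basic_entourage_antimono; simp)+
  with sub have "?W \<subseteq> U \<inter> V"
    by blast
  moreover have "max r\<^sub>U r\<^sub>V > 0" "min \<epsilon>\<^sub>U \<epsilon>\<^sub>V > 0"
    using pos by auto
  ultimately show ?thesis
    by (intro dr_entouragesI)
qed

lemma dr_entourages_relcomp_subset:
  assumes "weaker_dr_axioms d" "U \<in> dr_entourages d"
  shows "\<exists>V\<in>dr_entourages d. V O V \<subseteq> U"
proof -
  obtain r \<epsilon> where pos: "r > 0" "\<epsilon> > 0" and sub: "dr_basic_entourage d r \<epsilon> \<subseteq> U"
    using assms(2) by (auto simp: dr_entourages_iff)
  show ?thesis
  proof
    show "dr_basic_entourage d (r + \<epsilon>) (\<epsilon>/2) \<in> dr_entourages d"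
      using pos by (intro dr_entouragesI[OF _ _ order.refl]) auto
    show "dr_basic_entourage d (r + \<epsilon>) (\<epsilon>/2) O dr_basic_entourage d (r + \<epsilon>) (\<epsilon>/2) \<subseteq> U"
      using dr_basic_entourage_relcomp_subset[OF assms(1) pos] sub by blast
  qed
qed

lemma is_quasi_uniformity_dr_entourages:
  assumes "weaker_dr_axioms d"
  shows "is_quasi_uniformity (dr_entourages d)"
  unfolding is_quasi_uniformity_def
proof (intro conjI ballI allI impI)
  show "V \<in> dr_entourages d" if "U \<in> dr_entourages d" "U \<subseteq> V" for U V
    using that by (auto simp: dr_entourages_iff)
  show "U \<inter> V \<in> dr_entourages d" if "U \<in> dr_entourages d" "V \<in> dr_entourages d" for U V
    using assms that by (rule dr_entourages_Int)
  show "Id \<subseteq> U" if U: "U \<in> dr_entourages d" for U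
  proof -
    obtain r \<epsilon> where "r > 0" "\<epsilon> > 0" "dr_basic_entourage d r \<epsilon> \<subseteq> U"
      using U by (auto simp: dr_entourages_iff)
    with Id_subset_dr_basic_entourage[OF assms] show ?thesis
      by blast
  qed
  show "\<exists>V\<in>dr_entourages d. V O V \<subseteq> U" if "U \<in> dr_entourages d" for U
    using assms that by (rule dr_entourages_relcomp_subset)
qed

lemma is_uniformity_dr_entourages:
  assumes "weaker_dr_axioms d" "\<And>r x y. r > 0 \<Longrightarrow> d r x y = d r y x"
  shows "is_uniformity (dr_entourages d)"
  unfolding is_uniformity_def
proof (intro conjI ballI)
  show "is_quasi_uniformity (dr_entourages d)"
    using assms(1) by (rule is_quasi_uniformity_dr_entourages)
  show "U\<inverse> \<in> dr_entourages d" if U: "U \<in> dr_entourages d" for U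
  proof -
    obtain r \<epsilon> where pos: "r > 0" "\<epsilon> > 0" and sub: "dr_basic_entourage d r \<epsilon> \<subseteq> U"
      using U by (auto simp: dr_entourages_iff)
    have "dr_basic_entourage d r \<epsilon> = (dr_basic_entourage d r \<epsilon>)\<inverse>"
      using assms(2)[OF pos(1)] by (rule converse_dr_basic_entourage[symmetric])
    also have "\<dots> \<subseteq> U\<inverse>"
      using sub by (rule converse_mono[THEN iffD2])
    finally have "dr_basic_entourage d r \<epsilon> \<subseteq> U\<inverse>" .
    with pos show ?thesis
      by (rule dr_entouragesI)
  qed
qed

theorem proposition4p6:
  fixes d :: "real \<Rightarrow> 'a \<Rightarrow> 'a \<Rightarrow> ennreal"
  assumes "weaker_dr_axioms d"
  shows "is_quasi_uniformity (dr_entourages d) \<and>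
         ((\<forall>r>0. \<forall>x y. d r x y = d r y x) \<longrightarrow> is_uniformity (dr_entourages d))"
  using assms is_quasi_uniformity_dr_entourages is_uniformity_dr_entourages by blast

end
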